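(* Let $p(y,z|x)$ be a discrete memoryless broadcast channel with input alphabet $\mathcal{X}=\{0,1,\dots,m-1\}$. Let $U,V,X$ be random variables with $U,V$ on finite sets $\mathcal{U},\mathcal{V}$ and $X$ on $\mathcal{X}$, and let $(Y,Z)$ be obtained from $X$ through the channel, so that $(U,V)\to X\to(Y,Z)$ is a Markov chain. Define $U^*$ on $\mathcal{U}\times\{0,\dots,m-1\}$, $V^*$ on $\mathcal{V}\times\{0,\dots,m-1\}$, $X^*$ on $\mathcal{X}$ (writing $u_i=(u,i)$, $v_j=(v,j)$) by $P(U^*=u_i,V^*=v_j)=\frac1m P(U=u,V=v,X=(i-j)_m)$ and $X^*=(i-j)_m$ when $(U^*,V^* )=(u_i,v_j)$, where $(l)_m$ is the remainder of $l$ modulo $m$; and let $(Y^*,Z^* )$ be obtained from $X^*$ through the same channel, so $(U^*,V^* )\to X^*\to(Y^*,Z^* )$ is a Markov chain with $p(y^*,z^*|x^* )=p(y,z|x)$. Then: (i) $P(X^*=i)=P(X=i)$ for $0\le i\le m-1$; (ii) $H(Y^*|U^* )=H(Y|U)$; (iii) $H(Z^*|U^* )=H(Z|U)$; (iv) $H(Y^*|V^* )=H(Y|V)$; (v) $H(Z^*|V^* )=H(Z|V)$; (vi) $H(Y^*|U^*,V^* )=H(Y^*|X^* )=H(Y|X)\le H(Y|U,V)$; (vii) $H(Z^*|U^*,V^* )=H(Z^*|X^* )=H(Z|X)\le H(Z|U,V)$. *)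

theory Defs
  imports Complex_Main
begin

text \<open>Finite probability spaces are given by a nonnegative mass function f on a finite
  sample set S. Random variables are functions on the sample points.\<close>

definition marg :: "('w \<Rightarrow> real) \<Rightarrow> 'w set \<Rightarrow> ('w \<Rightarrow> 'b) \<Rightarrow> 'b \<Rightarrow> real" where
  "marg f S A a = (\<Sum>\<omega>\<in>{\<omega>\<in>S. A \<omega> = a}. f \<omega>)"

text \<open>Conditional entropy H(A|B) = - sum p(a,b) log2 (p(a,b)/p(b)), written as an
  expectation over sample points (terms with zero mass vanish).\<close>
definition cond_entropy :: "('w \<Rightarrow> real) \<Rightarrow> 'w set \<Rightarrow> ('w \<Rightarrow> 'a) \<Rightarrow> ('w \<Rightarrow> 'b) \<Rightarrow> real" where
  "cond_entropy f S A B =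
     - (\<Sum>\<omega>\<in>S. f \<omega> * log 2 (marg f S (\<lambda>w. (A w, B w)) (A \<omega>, B \<omega>) / marg f S B (B \<omega>)))"

text \<open>Joint law of (U,V,X,Y,Z) where (U,V,X) has mass Q and (Y,Z) arises from X through
  the channel W, i.e. (U,V) -> X -> (Y,Z) is a Markov chain.\<close>
definition bc_joint :: "('a \<Rightarrow> 'b \<Rightarrow> nat \<Rightarrow> real) \<Rightarrow> (nat \<Rightarrow> 'y \<Rightarrow> 'z \<Rightarrow> real)
    \<Rightarrow> ('a \<times> 'b \<times> nat \<times> 'y \<times> 'z) \<Rightarrow> real" where
  "bc_joint Q W = (\<lambda>(a, b, x, y, z). Q a b x * W x y z)"

definition modm :: "nat \<Rightarrow> nat \<Rightarrow> nat \<Rightarrow> nat" where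
  "modm m i j = nat ((int i - int j) mod int m)"

definition star_dist :: "nat \<Rightarrow> ('u \<Rightarrow> 'v \<Rightarrow> nat \<Rightarrow> real)
    \<Rightarrow> ('u \<times> nat) \<Rightarrow> ('v \<times> nat) \<Rightarrow> nat \<Rightarrow> real" where
  "star_dist m P = (\<lambda>(u, i) (v, j) x. if x = modm m i j then P u v x / real m else 0)"

end

theory Submission
  imports Defs
begin

text \<open>
  The starred variables attach indices i, j < m to U and V, subject to X = (i - j) mod m. For
  fixed i exactly one j satisfies this constraint, so forgetting j shows that i is uniform and
  independent of (U, V, X, Y, Z); symmetrically for j, and forgetting both indices recovers the
  original law. Conditional entropy is invariant under such mass-preserving maps and under
  adjoining an independent index to the conditioning variable, which gives (i)-(v) and
  H(Y*|X*) = H(Y|X). As X* is a function of (U*, V*) on the support and the output depends on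
  the input only through X*, also H(Y*|U*,V*) = H(Y*|X*). Finally H(Y|X) = H(Y|U,V,X), which is
  at most H(Y|U,V) because conditioning on a finer variable cannot increase entropy.
\<close>

lemma marg_eq_sum:
  "finite S \<Longrightarrow> marg f S A a = (\<Sum>\<omega>\<in>S. f \<omega> * of_bool (A \<omega> = a))"
  unfolding marg_def by (simp add: sum.inter_filter[symmetric] Int_def)

lemma marg_nonneg:
  "(\<And>\<omega>. \<omega> \<in> S \<Longrightarrow> f \<omega> \<ge> 0) \<Longrightarrow> marg f S A a \<ge> 0"
  unfolding marg_def by (intro sum_nonneg) auto

lemma marg_pos:
  assumes "finite S" "\<And>\<omega>. \<omega> \<in> S \<Longrightarrow> f \<omega> \<ge> 0" "\<omega> \<in> S" "f \<omega> > 0"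
  shows "marg f S A (A \<omega>) > 0"
proof -
  have "f \<omega> \<le> marg f S A (A \<omega>)"
    unfolding marg_def using assms by (intro member_le_sum) auto
  then show ?thesis
    using assms(4) by linarith
qed

lemma sum_mass_marg:
  assumes "finite S" "finite T" "A ` S \<subseteq> T"
  shows "(\<Sum>\<omega>\<in>S. f \<omega> * h (A \<omega>)) = (\<Sum>a\<in>T. marg f S A a * h a)"
proof -
  have "(\<Sum>\<omega>\<in>S. f \<omega> * h (A \<omega>)) = (\<Sum>a\<in>T. \<Sum>\<omega>\<in>{\<omega>\<in>S. A \<omega> = a}. f \<omega> * h (A \<omega>))"
    using sum.group[OF assms, of "\<lambda>\<omega>. f \<omega> * h (A \<omega>)"] by simp
  also have "\<dots> = (\<Sum>a\<in>T. marg f S A a * h a)"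
    unfolding marg_def by (intro sum.cong refl) (simp add: sum_distrib_right)
  finally show ?thesis .
qed

definition mass_preserving ::
    "('w \<Rightarrow> 'w') \<Rightarrow> ('w \<Rightarrow> real) \<Rightarrow> 'w set \<Rightarrow> ('w' \<Rightarrow> real) \<Rightarrow> 'w' set \<Rightarrow> bool" where
  "mass_preserving \<pi> f S f' S' \<longleftrightarrow>
     (\<forall>g. (\<Sum>\<omega>\<in>S. f \<omega> * g (\<pi> \<omega>)) = (\<Sum>\<omega>'\<in>S'. f' \<omega>' * g \<omega>'))"

lemma mass_preservingD:
  "mass_preserving \<pi> f S f' S' \<Longrightarrow> (\<Sum>\<omega>\<in>S. f \<omega> * g (\<pi> \<omega>)) = (\<Sum>\<omega>'\<in>S'. f' \<omega>' * g \<omega>')"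
  unfolding mass_preserving_def by blast

lemma mass_preservingI:
  assumes "finite S" "finite S'" "\<pi> ` S \<subseteq> S'"
    and fibre: "\<And>\<omega>'. \<omega>' \<in> S' \<Longrightarrow> (\<Sum>\<omega>\<in>{\<omega>\<in>S. \<pi> \<omega> = \<omega>'}. f \<omega>) = f' \<omega>'"
  shows "mass_preserving \<pi> f S f' S'"
  unfolding mass_preserving_def
proof
  fix g :: "'b \<Rightarrow> real"
  have "(\<Sum>\<omega>\<in>S. f \<omega> * g (\<pi> \<omega>)) = (\<Sum>\<omega>'\<in>S'. \<Sum>\<omega>\<in>{\<omega>\<in>S. \<pi> \<omega> = \<omega>'}. f \<omega> * g (\<pi> \<omega>))"
    using sum.group[OF assms(1-3), of "\<lambda>\<omega>. f \<omega> * g (\<pi> \<omega>)"] by simp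
  also have "\<dots> = (\<Sum>\<omega>'\<in>S'. (\<Sum>\<omega>\<in>{\<omega>\<in>S. \<pi> \<omega> = \<omega>'}. f \<omega>) * g \<omega>')"
    by (simp add: sum_distrib_right)
  also have "\<dots> = (\<Sum>\<omega>'\<in>S'. f' \<omega>' * g \<omega>')"
    using fibre by simp
  finally show "(\<Sum>\<omega>\<in>S. f \<omega> * g (\<pi> \<omega>)) = (\<Sum>\<omega>'\<in>S'. f' \<omega>' * g \<omega>')" .
qed

lemma mass_preserving_comp:
  assumes "mass_preserving \<pi> f S f' S'" "mass_preserving \<rho> f' S' f'' S''"
  shows "mass_preserving (\<lambda>\<omega>. \<rho> (\<pi> \<omega>)) f S f'' S''"
  unfolding mass_preserving_def
proof
  fix g :: "'c \<Rightarrow> real"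
  show "(\<Sum>\<omega>\<in>S. f \<omega> * g (\<rho> (\<pi> \<omega>))) = (\<Sum>\<omega>''\<in>S''. f'' \<omega>'' * g \<omega>'')"
    using mass_preservingD[OF assms(1), of "\<lambda>\<omega>'. g (\<rho> \<omega>')"] mass_preservingD[OF assms(2), of g]
    by simp
qed

lemma mass_preserving_fst_product:
  assumes "sum g I = 1"
  shows "mass_preserving fst (\<lambda>p. f (fst p) * g (snd p)) (S \<times> I) f S"
  unfolding mass_preserving_def
proof
  fix h
  have "(\<Sum>p\<in>S \<times> I. f (fst p) * g (snd p) * h (fst p)) = (\<Sum>\<omega>\<in>S. f \<omega> * h \<omega> * sum g I)"
    unfolding sum.cartesian_product' sum_distrib_left by (simp add: mult_ac)
  then show "(\<Sum>p\<in>S \<times> I. f (fst p) * g (snd p) * h (fst p)) = (\<Sum>\<omega>\<in>S. f \<omega> * h \<omega>)"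
    using assms by simp
qed

lemma marg_mass_preserving:
  assumes "mass_preserving \<pi> f S f' S'" "finite S" "finite S'"
    and "\<And>\<omega>. \<omega> \<in> S \<Longrightarrow> A \<omega> = A' (\<pi> \<omega>)"
  shows "marg f S A a = marg f' S' A' a"
proof -
  have "marg f S A a = (\<Sum>\<omega>\<in>S. f \<omega> * of_bool (A' (\<pi> \<omega>) = a))"
    unfolding marg_eq_sum[OF assms(2)] using assms(4) by (intro sum.cong) auto
  also have "\<dots> = (\<Sum>\<omega>'\<in>S'. f' \<omega>' * of_bool (A' \<omega>' = a))"
    by (rule mass_preservingD[OF assms(1)])
  finally show ?thesis
    unfolding marg_eq_sum[OF assms(3)] .
qed

lemma cond_entropy_mass_preserving:
  assumes "mass_preserving \<pi> f S f' S'" "finite S" "finite S'"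
    and "\<And>\<omega>. \<omega> \<in> S \<Longrightarrow> A \<omega> = A' (\<pi> \<omega>)" "\<And>\<omega>. \<omega> \<in> S \<Longrightarrow> B \<omega> = B' (\<pi> \<omega>)"
  shows "cond_entropy f S A B = cond_entropy f' S' A' B'"
proof -
  have AB: "marg f S (\<lambda>w. (A w, B w)) = marg f' S' (\<lambda>w. (A' w, B' w))"
    using assms by (intro ext marg_mass_preserving) auto
  have B: "marg f S B = marg f' S' B'"
    using assms by (intro ext marg_mass_preserving) auto
  have "cond_entropy f S A B = - (\<Sum>\<omega>\<in>S. f \<omega> *
      log 2 (marg f' S' (\<lambda>w. (A' w, B' w)) (A' (\<pi> \<omega>), B' (\<pi> \<omega>)) / marg f' S' B' (B' (\<pi> \<omega>))))"
    unfolding cond_entropy_def AB B using assms(4,5) by simp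
  also have "\<dots> = cond_entropy f' S' A' B'"
    unfolding cond_entropy_def by (subst mass_preservingD[OF assms(1)]) (rule refl)
  finally show ?thesis .
qed

lemma cond_entropy_indep_index:
  assumes "sum g I = 1"
  shows "cond_entropy (\<lambda>p. f (fst p) * g (snd p)) (S \<times> I) (\<lambda>p. A (fst p)) (\<lambda>p. (B (fst p), snd p))
       = cond_entropy f S A B"
proof -
  let ?F = "\<lambda>p. f (fst p) * g (snd p)"
  define h where "h \<omega> = log 2 (marg f S (\<lambda>w. (A w, B w)) (A \<omega>, B \<omega>) / marg f S B (B \<omega>))" for \<omega>
  have AB: "marg ?F (S \<times> I) (\<lambda>p. (A (fst p), B (fst p), snd p)) (a, b, i)
      = marg f S (\<lambda>w. (A w, B w)) (a, b) * g i"
   and B: "marg ?F (S \<times> I) (\<lambda>p. (B (fst p), snd p)) (b, i) = marg f S B b * g i"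
    if "i \<in> I" for a b i
  proof -
    have "{p \<in> S \<times> I. (A (fst p), B (fst p), snd p) = (a, b, i)} = {\<omega> \<in> S. (A \<omega>, B \<omega>) = (a, b)} \<times> {i}"
         "{p \<in> S \<times> I. (B (fst p), snd p) = (b, i)} = {\<omega> \<in> S. B \<omega> = b} \<times> {i}"
      using that by auto
    then show "marg ?F (S \<times> I) (\<lambda>p. (A (fst p), B (fst p), snd p)) (a, b, i)
        = marg f S (\<lambda>w. (A w, B w)) (a, b) * g i"
      and "marg ?F (S \<times> I) (\<lambda>p. (B (fst p), snd p)) (b, i) = marg f S B b * g i"
      unfolding marg_def by (simp_all only: sum.cartesian_product' sum_distrib_right) simp_all
  qed
  have summand: "?F p * log 2 (marg ?F (S \<times> I) (\<lambda>p. (A (fst p), B (fst p), snd p)) (A (fst p), B (fst p), snd p)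
        / marg ?F (S \<times> I) (\<lambda>p. (B (fst p), snd p)) (B (fst p), snd p)) = g (snd p) * (f (fst p) * h (fst p))"
    if "p \<in> S \<times> I" for p
    using that by (cases "g (snd p) = 0") (auto simp: AB B h_def)
  have "cond_entropy ?F (S \<times> I) (\<lambda>p. A (fst p)) (\<lambda>p. (B (fst p), snd p))
      = - (\<Sum>\<omega>\<in>S. \<Sum>i\<in>I. g i * (f \<omega> * h \<omega>))"
    unfolding cond_entropy_def by (simp add: summand sum.cartesian_product')
  also have "\<dots> = cond_entropy f S A B"
    unfolding cond_entropy_def h_def by (simp add: sum_distrib_right[symmetric] assms)
  finally show ?thesis .
qed

lemma sum_marg_eq_mass:
  assumes "finite S" "finite T" "A ` S \<subseteq> T"
  shows "(\<Sum>a\<in>T. marg f S A a) = sum f S"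
  using sum_mass_marg[OF assms, of f "\<lambda>_. 1"] by simp

lemma sum_marg_pair_fst:
  assumes "finite S" "finite T" "A ` S \<subseteq> T"
  shows "(\<Sum>a\<in>T. marg f S (\<lambda>w. (A w, B w)) (a, b)) = marg f S B b"
proof -
  have "(\<Sum>a\<in>T. marg f S (\<lambda>w. (A w, B w)) (a, b)) = (\<Sum>a\<in>T. marg f {\<omega> \<in> S. B \<omega> = b} A a)"
    unfolding marg_def by (intro sum.cong arg_cong[where f = "sum f"]) auto
  also have "\<dots> = marg f S B b"
    using assms by (subst sum_marg_eq_mass) (auto simp: marg_def)
  finally show ?thesis .
qed

lemma sum_mass_log_nonpos:
  assumes "finite S" "\<And>\<omega>. \<omega> \<in> S \<Longrightarrow> f \<omega> \<ge> 0" "\<And>\<omega>. \<omega> \<in> S \<Longrightarrow> f \<omega> \<noteq> 0 \<Longrightarrow> t \<omega> > 0"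
    and "(\<Sum>\<omega>\<in>S. f \<omega> * t \<omega>) \<le> sum f S"
  shows "(\<Sum>\<omega>\<in>S. f \<omega> * log 2 (t \<omega>)) \<le> 0"
proof -
  have "f \<omega> * log 2 (t \<omega>) \<le> (f \<omega> * t \<omega> - f \<omega>) / ln 2" if "\<omega> \<in> S" for \<omega>
  proof (cases "f \<omega> = 0")
    case False
    then have "log 2 (t \<omega>) \<le> (t \<omega> - 1) / ln 2"
      using assms(3)[OF that] ln_le_minus_one[of "t \<omega>"] by (simp add: log_def divide_right_mono)
    then have "f \<omega> * log 2 (t \<omega>) \<le> f \<omega> * ((t \<omega> - 1) / ln 2)"
      using assms(2)[OF that] by (rule mult_left_mono)
    then show ?thesis
      by (simp add: right_diff_distrib)
  qed simp
  then have "(\<Sum>\<omega>\<in>S. f \<omega> * log 2 (t \<omega>)) \<le> (\<Sum>\<omega>\<in>S. (f \<omega> * t \<omega> - f \<omega>) / ln 2)"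
    by (rule sum_mono)
  also have "\<dots> = ((\<Sum>\<omega>\<in>S. f \<omega> * t \<omega>) - sum f S) / ln 2"
    by (simp add: sum_subtractf flip: sum_divide_distrib)
  also have "\<dots> \<le> 0"
    using assms(4) by (simp add: divide_nonpos_pos)
  finally show ?thesis .
qed

lemma sum_mass_refinement_ratio_le:
  fixes A :: "'w \<Rightarrow> 'a"
  assumes fin: "finite S" and nonneg: "\<And>\<omega>. \<omega> \<in> S \<Longrightarrow> f \<omega> \<ge> 0"
    and B: "\<And>\<omega>. \<omega> \<in> S \<Longrightarrow> B \<omega> = g (C \<omega>)"
  defines "pAC \<equiv> marg f S (\<lambda>w. (A w, C w))" and "pC \<equiv> marg f S C"
    and "pAB \<equiv> marg f S (\<lambda>w. (A w, B w))" and "pB \<equiv> marg f S B"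
  shows "(\<Sum>\<omega>\<in>S. f \<omega> * (pC (C \<omega>) * pAB (A \<omega>, B \<omega>) / (pAC (A \<omega>, C \<omega>) * pB (B \<omega>))))
    \<le> sum f S"
proof -
  have "pAB p \<ge> 0" "pB b \<ge> 0" "pC c \<ge> 0" for p b c
    unfolding pAB_def pB_def pC_def using nonneg by (auto intro: marg_nonneg)
  note margs_nonneg = this
  define k where "k p = pC (snd p) * pAB (fst p, g (snd p)) / (pAC p * pB (g (snd p)))" for p
  have "(\<Sum>\<omega>\<in>S. f \<omega> * (pC (C \<omega>) * pAB (A \<omega>, B \<omega>) / (pAC (A \<omega>, C \<omega>) * pB (B \<omega>))))
      = (\<Sum>\<omega>\<in>S. f \<omega> * k (A \<omega>, C \<omega>))"
    using B by (simp add: k_def)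
  also have "\<dots> = (\<Sum>p\<in>(\<lambda>w. (A w, C w)) ` S. pAC p * k p)"
    unfolding pAC_def using fin by (intro sum_mass_marg) auto
  also have "\<dots> \<le> (\<Sum>p\<in>(\<lambda>w. (A w, C w)) ` S. pC (snd p) * pAB (fst p, g (snd p)) / pB (g (snd p)))"
    using margs_nonneg by (intro sum_mono) (auto simp: k_def)
  also have "\<dots> \<le> (\<Sum>p\<in>A ` S \<times> C ` S. pC (snd p) * pAB (fst p, g (snd p)) / pB (g (snd p)))"
    using fin margs_nonneg by (intro sum_mono2) auto
  also have "\<dots> = (\<Sum>c\<in>C ` S. pC c / pB (g c) * (\<Sum>a\<in>A ` S. pAB (a, g c)))"
    by (simp add: sum.cartesian_product' sum.swap[of _ "A ` S"] sum_distrib_left)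
  also have "\<dots> = (\<Sum>c\<in>C ` S. pC c / pB (g c) * pB (g c))"
    unfolding pAB_def pB_def using fin by (simp add: sum_marg_pair_fst)
  also have "\<dots> \<le> (\<Sum>c\<in>C ` S. pC c)"
    using margs_nonneg by (intro sum_mono) auto
  also have "\<dots> = sum f S"
    unfolding pC_def using fin by (intro sum_marg_eq_mass) auto
  finally show ?thesis .
qed

lemma cond_entropy_finer_le:
  assumes fin: "finite S" and nonneg: "\<And>\<omega>. \<omega> \<in> S \<Longrightarrow> f \<omega> \<ge> 0"
    and B: "\<And>\<omega>. \<omega> \<in> S \<Longrightarrow> B \<omega> = g (C \<omega>)"
  shows "cond_entropy f S A C \<le> cond_entropy f S A B"
proof -
  define pAC where "pAC = marg f S (\<lambda>w. (A w, C w))"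
  define pC where "pC = marg f S C"
  define pAB where "pAB = marg f S (\<lambda>w. (A w, B w))"
  define pB where "pB = marg f S B"
  define t where "t \<omega> = pC (C \<omega>) * pAB (A \<omega>, B \<omega>) / (pAC (A \<omega>, C \<omega>) * pB (B \<omega>))" for \<omega>
  have pos: "pAC (A \<omega>, C \<omega>) > 0" "pC (C \<omega>) > 0" "pAB (A \<omega>, B \<omega>) > 0" "pB (B \<omega>) > 0"
    if "\<omega> \<in> S" "f \<omega> \<noteq> 0" for \<omega>
  proof -
    have "f \<omega> > 0"
      using nonneg[OF that(1)] that(2) by simp
    then show "pAC (A \<omega>, C \<omega>) > 0" "pC (C \<omega>) > 0" "pAB (A \<omega>, B \<omega>) > 0" "pB (B \<omega>) > 0"
      unfolding pAC_def pC_def pAB_def pB_def using fin nonneg that(1) by (auto intro: marg_pos)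
  qed
  have "f \<omega> * log 2 (pAB (A \<omega>, B \<omega>) / pB (B \<omega>))
      = f \<omega> * log 2 (pAC (A \<omega>, C \<omega>) / pC (C \<omega>)) + f \<omega> * log 2 (t \<omega>)" if "\<omega> \<in> S" for \<omega>
    using pos[OF that] by (cases "f \<omega> = 0") (simp_all add: t_def log_mult log_divide ring_distribs)
  then have "cond_entropy f S A B = cond_entropy f S A C - (\<Sum>\<omega>\<in>S. f \<omega> * log 2 (t \<omega>))"
    unfolding cond_entropy_def pAC_def pC_def pAB_def pB_def by (simp add: sum.distrib)
  moreover have "(\<Sum>\<omega>\<in>S. f \<omega> * log 2 (t \<omega>)) \<le> 0"
  proof (rule sum_mass_log_nonpos[OF fin nonneg])
    show "t \<omega> > 0" if "\<omega> \<in> S" "f \<omega> \<noteq> 0" for \<omega>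
      using pos[OF that] by (simp add: t_def)
    show "(\<Sum>\<omega>\<in>S. f \<omega> * t \<omega>) \<le> sum f S"
      unfolding t_def pAC_def pC_def pAB_def pB_def using fin nonneg B by (rule sum_mass_refinement_ratio_le)
  qed
  ultimately show ?thesis by linarith
qed

lemma modm_lt: "0 < m \<Longrightarrow> modm m i j < m"
  unfolding modm_def by (simp add: nat_less_iff)

lemma modm_eq_iff: "x < m \<Longrightarrow> modm m i j = x \<longleftrightarrow> (int i - int j) mod int m = int x"
  unfolding modm_def by auto

lemma modm_eq_iff_snd:
  assumes "x < m" "j < m"
  shows "modm m i j = x \<longleftrightarrow> j = modm m i x"
proof -
  have "(int i - int j) mod int m = int x \<longleftrightarrow> int j = (int i - int x) mod int m"
  proof
    assume "(int i - int j) mod int m = int x"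
    then have "(int i - int x) mod int m = (int i - (int i - int j) mod int m) mod int m" by simp
    then show "int j = (int i - int x) mod int m"
      using assms by (simp add: mod_diff_right_eq)
  next
    assume "int j = (int i - int x) mod int m"
    then have "(int i - int j) mod int m = (int i - (int i - int x) mod int m) mod int m" by simp
    then show "(int i - int j) mod int m = int x"
      using assms by (simp add: mod_diff_right_eq)
  qed
  then show ?thesis
    using assms unfolding modm_eq_iff[OF assms(1)] by (auto simp: modm_def)
qed

lemma modm_eq_iff_fst:
  assumes "x < m" "i < m"
  shows "modm m i j = x \<longleftrightarrow> i = (x + j) mod m"
proof -
  have "(int i - int j) mod int m = int x \<longleftrightarrow> int i = (int x + int j) mod int m"
  proof
    assume "(int i - int j) mod int m = int x"
    then have "(int x + int j) mod int m = ((int i - int j) mod int m + int j) mod int m" by simp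
    then show "int i = (int x + int j) mod int m"
      using assms by (simp add: mod_add_left_eq)
  next
    assume "int i = (int x + int j) mod int m"
    then have "(int i - int j) mod int m = ((int x + int j) mod int m - int j) mod int m" by simp
    then show "(int i - int j) mod int m = int x"
      using assms by (simp add: mod_diff_left_eq)
  qed
  then show ?thesis
    unfolding modm_eq_iff[OF assms(1)] by (metis of_nat_add of_nat_eq_iff zmod_int)
qed

text \<open>Observations Ob of the output treat both receivers at once: Ob = fst gives Y, Ob = snd gives Z.\<close>

definition output_prob :: "(nat \<Rightarrow> 'y \<Rightarrow> 'z \<Rightarrow> real) \<Rightarrow> ('y \<times> 'z \<Rightarrow> 'c) \<Rightarrow> nat \<Rightarrow> 'c \<Rightarrow> real" where
  "output_prob W Ob x c = (\<Sum>p | Ob p = c. W x (fst p) (snd p))"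

lemma output_prob_eq_sum:
  "output_prob W Ob x c = (\<Sum>y\<in>UNIV. \<Sum>z\<in>UNIV. W x y z * of_bool (Ob (y, z) = c))"
  for W :: "nat \<Rightarrow> 'y::finite \<Rightarrow> 'z::finite \<Rightarrow> real"
proof -
  have "output_prob W Ob x c = (\<Sum>p\<in>UNIV. W x (fst p) (snd p) * of_bool (Ob p = c))"
    unfolding output_prob_def by (rule sum.mono_neutral_cong_left) auto
  then show ?thesis by (simp add: sum.cartesian_product' flip: UNIV_Times_UNIV)
qed

locale broadcast_channel =
  fixes m :: nat and W :: "nat \<Rightarrow> 'y::finite \<Rightarrow> 'z::finite \<Rightarrow> real"
  assumes W_nonneg: "\<And>x y z. x < m \<Longrightarrow> W x y z \<ge> 0"
    and W_sum: "\<And>x. x < m \<Longrightarrow> (\<Sum>y\<in>UNIV. \<Sum>z\<in>UNIV. W x y z) = 1"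
begin

lemma output_prob_unit: "x < m \<Longrightarrow> output_prob W (\<lambda>_. ()) x () = 1"
  using W_sum by (simp add: output_prob_eq_sum)

context
  fixes Q :: "'a \<Rightarrow> 'b \<Rightarrow> nat \<Rightarrow> real" and A :: "'a set" and B :: "'b set"
    and D :: "'a \<times> 'b \<times> nat \<times> 'y \<times> 'z \<Rightarrow> 'd" and d :: "'a \<times> 'b \<times> nat \<Rightarrow> 'd"
  assumes finite_AB: "finite A" "finite B"
    and D_input: "\<And>a b x y z. D (a, b, x, y, z) = d (a, b, x)"
begin

lemma marg_bc_joint_output_input:
  "marg (bc_joint Q W) (A \<times> B \<times> {..<m} \<times> UNIV \<times> UNIV) (\<lambda>w. (Ob (snd (snd (snd w))), D w)) (c, \<delta>)
     = (\<Sum>(a, b, x)\<in>A \<times> B \<times> {..<m}. of_bool (d (a, b, x) = \<delta>) * Q a b x * output_prob W Ob x c)"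
  using finite_AB D_input by (simp add: marg_eq_sum output_prob_eq_sum sum.cartesian_product' bc_joint_def
      sum_distrib_left mult_ac of_bool_conj del: sum_mult_of_bool_eq sum_of_bool_mult_eq UNIV_Times_UNIV)

lemma marg_bc_joint_input:
  "marg (bc_joint Q W) (A \<times> B \<times> {..<m} \<times> UNIV \<times> UNIV) D \<delta>
     = (\<Sum>(a, b, x)\<in>A \<times> B \<times> {..<m}. of_bool (d (a, b, x) = \<delta>) * Q a b x)"
proof -
  have "marg (bc_joint Q W) (A \<times> B \<times> {..<m} \<times> UNIV \<times> UNIV) D \<delta>
      = marg (bc_joint Q W) (A \<times> B \<times> {..<m} \<times> UNIV \<times> UNIV) (\<lambda>w. ((\<lambda>_. ()) (snd (snd (snd w))), D w)) ((), \<delta>)"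
    by (simp add: marg_def)
  also have "\<dots> = (\<Sum>(a, b, x)\<in>A \<times> B \<times> {..<m}. of_bool (d (a, b, x) = \<delta>) * Q a b x)"
    unfolding marg_bc_joint_output_input[where Ob = "\<lambda>_. ()"] by (intro sum.cong) (auto simp: output_prob_unit)
  finally show ?thesis .
qed

context
  fixes \<xi> :: "'d \<Rightarrow> nat"
  assumes determined: "\<And>a b x. a \<in> A \<Longrightarrow> b \<in> B \<Longrightarrow> x < m \<Longrightarrow> Q a b x \<noteq> 0 \<Longrightarrow> x = \<xi> (d (a, b, x))"
begin

lemma marg_bc_joint_output_given_input:
  "marg (bc_joint Q W) (A \<times> B \<times> {..<m} \<times> UNIV \<times> UNIV) (\<lambda>w. (Ob (snd (snd (snd w))), D w)) (c, \<delta>)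
     = output_prob W Ob (\<xi> \<delta>) c * marg (bc_joint Q W) (A \<times> B \<times> {..<m} \<times> UNIV \<times> UNIV) D \<delta>"
proof -
  have "(\<Sum>(a, b, x)\<in>A \<times> B \<times> {..<m}. of_bool (d (a, b, x) = \<delta>) * Q a b x * output_prob W Ob x c)
      = (\<Sum>(a, b, x)\<in>A \<times> B \<times> {..<m}. of_bool (d (a, b, x) = \<delta>) * Q a b x * output_prob W Ob (\<xi> \<delta>) c)"
    using determined by (intro sum.cong) force+
  then show ?thesis
    unfolding marg_bc_joint_output_input marg_bc_joint_input
    by (simp add: sum_distrib_left split_beta mult_ac)
qed

lemma cond_entropy_bc_joint_output_given_input:
  assumes Q_nonneg: "\<And>a b x. Q a b x \<ge> 0"
  defines "S \<equiv> A \<times> B \<times> {..<m} \<times> UNIV \<times> UNIV"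
  shows "cond_entropy (bc_joint Q W) S (\<lambda>w. Ob (snd (snd (snd w)))) D
       = - (\<Sum>\<omega>\<in>S. bc_joint Q W \<omega> * log 2 (output_prob W Ob (fst (snd (snd \<omega>))) (Ob (snd (snd (snd \<omega>))))))"
  unfolding cond_entropy_def
proof (intro arg_cong[where f = uminus] sum.cong refl)
  fix \<omega> assume "\<omega> \<in> S"
  then obtain a b x y z where \<omega>: "\<omega> = (a, b, x, y, z)" "a \<in> A" "b \<in> B" "x < m"
    unfolding S_def by auto
  have nonneg: "bc_joint Q W \<omega>' \<ge> 0" if "\<omega>' \<in> S" for \<omega>'
    using that Q_nonneg W_nonneg unfolding S_def bc_joint_def by auto
  show "bc_joint Q W \<omega> * log 2 (marg (bc_joint Q W) S (\<lambda>w. (Ob (snd (snd (snd w))), D w))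
          (Ob (snd (snd (snd \<omega>))), D \<omega>) / marg (bc_joint Q W) S D (D \<omega>))
      = bc_joint Q W \<omega> * log 2 (output_prob W Ob (fst (snd (snd \<omega>))) (Ob (snd (snd (snd \<omega>)))))"
  proof (cases "bc_joint Q W \<omega> = 0")
    case False
    then have "Q a b x \<noteq> 0"
      by (simp add: \<omega> bc_joint_def)
    moreover have "marg (bc_joint Q W) S D (D \<omega>) > 0"
      using False nonneg[OF \<open>\<omega> \<in> S\<close>] finite_AB \<open>\<omega> \<in> S\<close>
      by (intro marg_pos[where f = "bc_joint Q W"] nonneg) (auto simp: S_def)
    ultimately show ?thesis
      unfolding S_def marg_bc_joint_output_given_input using determined[OF \<omega>(2-4)] \<omega> D_input
      by simp
  qed simp
qed

end

end

end

locale star_construction = broadcast_channel m W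
  for m :: nat and W :: "nat \<Rightarrow> 'y::finite \<Rightarrow> 'z::finite \<Rightarrow> real" +
  fixes P :: "'u::finite \<Rightarrow> 'v::finite \<Rightarrow> nat \<Rightarrow> real"
  assumes P_nonneg: "\<And>u v x. P u v x \<ge> 0" and m_pos: "0 < m"
begin

abbreviation space :: "('u \<times> 'v \<times> nat \<times> 'y \<times> 'z) set" where
  "space \<equiv> UNIV \<times> UNIV \<times> {..<m} \<times> UNIV \<times> UNIV"

abbreviation joint :: "'u \<times> 'v \<times> nat \<times> 'y \<times> 'z \<Rightarrow> real" where
  "joint \<equiv> bc_joint P W"

abbreviation star_space :: "(('u \<times> nat) \<times> ('v \<times> nat) \<times> nat \<times> 'y \<times> 'z) set" where
  "star_space \<equiv> (UNIV \<times> {..<m}) \<times> (UNIV \<times> {..<m}) \<times> {..<m} \<times> UNIV \<times> UNIV"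

abbreviation star_joint :: "('u \<times> nat) \<times> ('v \<times> nat) \<times> nat \<times> 'y \<times> 'z \<Rightarrow> real" where
  "star_joint \<equiv> bc_joint (star_dist m P) W"

lemma star_dist_nonneg: "star_dist m P a b x \<ge> 0"
  using P_nonneg by (simp add: star_dist_def split_beta)

lemma star_dist_sum_snd_index:
  assumes "i < m" "x < m"
  shows "(\<Sum>j<m. star_dist m P (u, i) (v, j) x) = P u v x / real m"
proof -
  have "(\<Sum>j<m. star_dist m P (u, i) (v, j) x) = (\<Sum>j<m. if j = modm m i x then P u v x / real m else 0)"
    using modm_eq_iff_snd[OF assms(2)] by (intro sum.cong) (simp_all add: star_dist_def eq_commute[of x])
  then show ?thesis
    using modm_lt[OF m_pos] by simp
qed

lemma star_dist_sum_fst_index: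
  assumes "j < m" "x < m"
  shows "(\<Sum>i<m. star_dist m P (u, i) (v, j) x) = P u v x / real m"
proof -
  have "(\<Sum>i<m. star_dist m P (u, i) (v, j) x) = (\<Sum>i<m. if i = (x + j) mod m then P u v x / real m else 0)"
    using modm_eq_iff_fst[OF assms(2)] by (intro sum.cong) (simp_all add: star_dist_def eq_commute[of x])
  then show ?thesis
    using m_pos by simp
qed

lemma mass_preserving_star_fst_index:
  "mass_preserving (\<lambda>((u, i), (v, j), t). ((u, v, t), i)) star_joint star_space
     (\<lambda>p. joint (fst p) * (1 / real m)) (space \<times> {..<m})"
proof (rule mass_preservingI)
  fix \<omega>' assume "\<omega>' \<in> space \<times> {..<m}"
  then obtain u v x y z i where \<omega>': "\<omega>' = ((u, v, x, y, z), i)" "x < m" "i < m"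
    by auto
  then have "{\<omega> \<in> star_space. (\<lambda>((u, i), (v, j), t). ((u, v, t), i)) \<omega> = \<omega>'}
      = (\<lambda>j. ((u, i), (v, j), x, y, z)) ` {..<m}"
    by auto
  then have "(\<Sum>\<omega>\<in>{\<omega> \<in> star_space. (\<lambda>((u, i), (v, j), t). ((u, v, t), i)) \<omega> = \<omega>'}. star_joint \<omega>)
      = (\<Sum>j<m. star_dist m P (u, i) (v, j) x) * W x y z"
    by (simp add: sum.reindex inj_on_def bc_joint_def sum_distrib_right)
  also have "\<dots> = joint (fst \<omega>') * (1 / real m)"
    using \<omega>' by (simp add: star_dist_sum_snd_index bc_joint_def)
  finally show "(\<Sum>\<omega>\<in>{\<omega> \<in> star_space. (\<lambda>((u, i), (v, j), t). ((u, v, t), i)) \<omega> = \<omega>'}. star_joint \<omega>)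
      = joint (fst \<omega>') * (1 / real m)" .
qed auto

lemma mass_preserving_star_snd_index:
  "mass_preserving (\<lambda>((u, i), (v, j), t). ((u, v, t), j)) star_joint star_space
     (\<lambda>p. joint (fst p) * (1 / real m)) (space \<times> {..<m})"
proof (rule mass_preservingI)
  fix \<omega>' assume "\<omega>' \<in> space \<times> {..<m}"
  then obtain u v x y z j where \<omega>': "\<omega>' = ((u, v, x, y, z), j)" "x < m" "j < m"
    by auto
  then have "{\<omega> \<in> star_space. (\<lambda>((u, i), (v, j), t). ((u, v, t), j)) \<omega> = \<omega>'}
      = (\<lambda>i. ((u, i), (v, j), x, y, z)) ` {..<m}"
    by auto
  then have "(\<Sum>\<omega>\<in>{\<omega> \<in> star_space. (\<lambda>((u, i), (v, j), t). ((u, v, t), j)) \<omega> = \<omega>'}. star_joint \<omega>)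
      = (\<Sum>i<m. star_dist m P (u, i) (v, j) x) * W x y z"
    by (simp add: sum.reindex inj_on_def bc_joint_def sum_distrib_right)
  also have "\<dots> = joint (fst \<omega>') * (1 / real m)"
    using \<omega>' by (simp add: star_dist_sum_fst_index bc_joint_def)
  finally show "(\<Sum>\<omega>\<in>{\<omega> \<in> star_space. (\<lambda>((u, i), (v, j), t). ((u, v, t), j)) \<omega> = \<omega>'}. star_joint \<omega>)
      = joint (fst \<omega>') * (1 / real m)" .
qed auto

lemma mass_preserving_star_forget_indices:
  "mass_preserving (\<lambda>((u, i), (v, j), t). (u, v, t)) star_joint star_space joint space"
proof -
  have "mass_preserving fst (\<lambda>p. joint (fst p) * (1 / real m)) (space \<times> {..<m}) joint space"
    using m_pos by (intro mass_preserving_fst_product) simp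
  then have "mass_preserving (\<lambda>\<omega>. fst ((\<lambda>((u, i), (v, j), t). ((u, v, t), i)) \<omega>))
      star_joint star_space joint space"
    by (rule mass_preserving_comp[OF mass_preserving_star_fst_index])
  moreover have "(\<lambda>\<omega>. fst ((\<lambda>((u, i), (v, j), t). ((u, v, t), i)) \<omega>)) = (\<lambda>((u, i), (v, j), t). (u, v, t))"
    by (auto simp: fun_eq_iff)
  ultimately show ?thesis
    by (metis (no_types))
qed

lemma star_marg_input:
  "marg star_joint star_space (\<lambda>w. fst (snd (snd w))) x = marg joint space (\<lambda>w. fst (snd (snd w))) x"
  by (rule marg_mass_preserving[OF mass_preserving_star_forget_indices]) auto

lemma star_cond_entropy_output_given_fst:
  "cond_entropy star_joint star_space (\<lambda>w. Ob (snd (snd (snd w)))) fst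
     = cond_entropy joint space (\<lambda>w. Ob (snd (snd (snd w)))) fst"
proof -
  have "cond_entropy star_joint star_space (\<lambda>w. Ob (snd (snd (snd w)))) fst
      = cond_entropy (\<lambda>p. joint (fst p) * (1 / real m)) (space \<times> {..<m})
          (\<lambda>p. Ob (snd (snd (snd (fst p))))) (\<lambda>p. (fst (fst p), snd p))"
    by (rule cond_entropy_mass_preserving[OF mass_preserving_star_fst_index]) auto
  also have "\<dots> = cond_entropy joint space (\<lambda>w. Ob (snd (snd (snd w)))) fst"
    using m_pos by (intro cond_entropy_indep_index) auto
  finally show ?thesis .
qed

lemma star_cond_entropy_output_given_snd:
  "cond_entropy star_joint star_space (\<lambda>w. Ob (snd (snd (snd w)))) (\<lambda>w. fst (snd w))
     = cond_entropy joint space (\<lambda>w. Ob (snd (snd (snd w)))) (\<lambda>w. fst (snd w))"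
proof -
  have "cond_entropy star_joint star_space (\<lambda>w. Ob (snd (snd (snd w)))) (\<lambda>w. fst (snd w))
      = cond_entropy (\<lambda>p. joint (fst p) * (1 / real m)) (space \<times> {..<m})
          (\<lambda>p. Ob (snd (snd (snd (fst p))))) (\<lambda>p. (fst (snd (fst p)), snd p))"
    by (rule cond_entropy_mass_preserving[OF mass_preserving_star_snd_index]) auto
  also have "\<dots> = cond_entropy joint space (\<lambda>w. Ob (snd (snd (snd w)))) (\<lambda>w. fst (snd w))"
    using m_pos by (intro cond_entropy_indep_index) auto
  finally show ?thesis .
qed

lemma star_cond_entropy_output_given_input:
  "cond_entropy star_joint star_space (\<lambda>w. Ob (snd (snd (snd w)))) (\<lambda>w. fst (snd (snd w)))
     = cond_entropy joint space (\<lambda>w. Ob (snd (snd (snd w)))) (\<lambda>w. fst (snd (snd w)))"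
  by (rule cond_entropy_mass_preserving[OF mass_preserving_star_forget_indices]) auto

lemma star_cond_entropy_output_given_pair:
  "cond_entropy star_joint star_space (\<lambda>w. Ob (snd (snd (snd w)))) (\<lambda>w. (fst w, fst (snd w)))
     = cond_entropy star_joint star_space (\<lambda>w. Ob (snd (snd (snd w)))) (\<lambda>w. fst (snd (snd w)))"
proof -
  have "star_dist m P a b x \<noteq> 0 \<Longrightarrow> x = modm m (snd a) (snd b)" for a b x
    by (auto simp: star_dist_def split: prod.splits if_splits)
  then show ?thesis
    using cond_entropy_bc_joint_output_given_input[where Q = "star_dist m P" and A = "UNIV \<times> {..<m}"
        and B = "UNIV \<times> {..<m}" and D = "\<lambda>w. (fst w, fst (snd w))" and d = "\<lambda>(a, b, x). (a, b)"
        and \<xi> = "\<lambda>(a, b). modm m (snd a) (snd b)" and Ob = Ob]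
      cond_entropy_bc_joint_output_given_input[where Q = "star_dist m P" and A = "UNIV \<times> {..<m}"
        and B = "UNIV \<times> {..<m}" and D = "\<lambda>w. fst (snd (snd w))" and d = "\<lambda>(a, b, x). x"
        and \<xi> = id and Ob = Ob]
    by (simp add: star_dist_nonneg)
qed

lemma cond_entropy_output_given_input_le_pair:
  "cond_entropy joint space (\<lambda>w. Ob (snd (snd (snd w)))) (\<lambda>w. fst (snd (snd w)))
     \<le> cond_entropy joint space (\<lambda>w. Ob (snd (snd (snd w)))) (\<lambda>w. (fst w, fst (snd w)))"
proof -
  have "cond_entropy joint space (\<lambda>w. Ob (snd (snd (snd w)))) (\<lambda>w. fst (snd (snd w)))
      = cond_entropy joint space (\<lambda>w. Ob (snd (snd (snd w)))) (\<lambda>w. (fst w, fst (snd w), fst (snd (snd w))))"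
    using cond_entropy_bc_joint_output_given_input[where Q = P and A = UNIV and B = UNIV
        and D = "\<lambda>w. fst (snd (snd w))" and d = "\<lambda>(a, b, x). x" and \<xi> = id and Ob = Ob]
      cond_entropy_bc_joint_output_given_input[where Q = P and A = UNIV and B = UNIV
        and D = "\<lambda>w. (fst w, fst (snd w), fst (snd (snd w)))" and d = id
        and \<xi> = "\<lambda>(a, b, x). x" and Ob = Ob]
    by (simp add: P_nonneg)
  also have "\<dots> \<le> cond_entropy joint space (\<lambda>w. Ob (snd (snd (snd w)))) (\<lambda>w. (fst w, fst (snd w)))"
    by (rule cond_entropy_finer_le[where g = "\<lambda>(a, b, x). (a, b)"])
      (auto simp: bc_joint_def intro: mult_nonneg_nonneg P_nonneg W_nonneg)
  finally show ?thesis .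
qed

end

theorem corollary3p4:
  fixes m :: nat
    and W :: "nat \<Rightarrow> 'y::finite \<Rightarrow> 'z::finite \<Rightarrow> real"
    and P :: "'u::finite \<Rightarrow> 'v::finite \<Rightarrow> nat \<Rightarrow> real"
  assumes W_nonneg: "\<And>x y z. x < m \<Longrightarrow> W x y z \<ge> 0"
    and W_sum: "\<And>x. x < m \<Longrightarrow> (\<Sum>y\<in>UNIV. \<Sum>z\<in>UNIV. W x y z) = 1"
    and P_nonneg: "\<And>u v x. P u v x \<ge> 0"
    and P_sum: "(\<Sum>u\<in>UNIV. \<Sum>v\<in>UNIV. \<Sum>x\<in>{..<m}. P u v x) = 1"
  defines "S \<equiv> (UNIV :: 'u set) \<times> (UNIV :: 'v set) \<times> {..<m} \<times> (UNIV :: 'y set) \<times> (UNIV :: 'z set)"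
    and "f \<equiv> bc_joint P W"
    and "Ss \<equiv> ((UNIV :: 'u set) \<times> {..<m}) \<times> ((UNIV :: 'v set) \<times> {..<m}) \<times> {..<m}
               \<times> (UNIV :: 'y set) \<times> (UNIV :: 'z set)"
    and "fs \<equiv> bc_joint (star_dist m P) W"
  shows
    "(\<forall>i<m. marg fs Ss (\<lambda>w. fst (snd (snd w))) i = marg f S (\<lambda>w. fst (snd (snd w))) i)
   \<and> cond_entropy fs Ss (\<lambda>w. fst (snd (snd (snd w)))) fst
       = cond_entropy f S (\<lambda>w. fst (snd (snd (snd w)))) fst
   \<and> cond_entropy fs Ss (\<lambda>w. snd (snd (snd (snd w)))) fst
       = cond_entropy f S (\<lambda>w. snd (snd (snd (snd w)))) fst
   \<and> cond_entropy fs Ss (\<lambda>w. fst (snd (snd (snd w)))) (\<lambda>w. fst (snd w))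
       = cond_entropy f S (\<lambda>w. fst (snd (snd (snd w)))) (\<lambda>w. fst (snd w))
   \<and> cond_entropy fs Ss (\<lambda>w. snd (snd (snd (snd w)))) (\<lambda>w. fst (snd w))
       = cond_entropy f S (\<lambda>w. snd (snd (snd (snd w)))) (\<lambda>w. fst (snd w))
   \<and> cond_entropy fs Ss (\<lambda>w. fst (snd (snd (snd w)))) (\<lambda>w. (fst w, fst (snd w)))
       = cond_entropy fs Ss (\<lambda>w. fst (snd (snd (snd w)))) (\<lambda>w. fst (snd (snd w)))
   \<and> cond_entropy fs Ss (\<lambda>w. fst (snd (snd (snd w)))) (\<lambda>w. fst (snd (snd w)))
       = cond_entropy f S (\<lambda>w. fst (snd (snd (snd w)))) (\<lambda>w. fst (snd (snd w)))
   \<and> cond_entropy f S (\<lambda>w. fst (snd (snd (snd w)))) (\<lambda>w. fst (snd (snd w)))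
       \<le> cond_entropy f S (\<lambda>w. fst (snd (snd (snd w)))) (\<lambda>w. (fst w, fst (snd w)))
   \<and> cond_entropy fs Ss (\<lambda>w. snd (snd (snd (snd w)))) (\<lambda>w. (fst w, fst (snd w)))
       = cond_entropy fs Ss (\<lambda>w. snd (snd (snd (snd w)))) (\<lambda>w. fst (snd (snd w)))
   \<and> cond_entropy fs Ss (\<lambda>w. snd (snd (snd (snd w)))) (\<lambda>w. fst (snd (snd w)))
       = cond_entropy f S (\<lambda>w. snd (snd (snd (snd w)))) (\<lambda>w. fst (snd (snd w)))
   \<and> cond_entropy f S (\<lambda>w. snd (snd (snd (snd w)))) (\<lambda>w. fst (snd (snd w)))
       \<le> cond_entropy f S (\<lambda>w. snd (snd (snd (snd w)))) (\<lambda>w. (fst w, fst (snd w)))"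
proof -
  have "0 < m"
    using P_sum by (cases m) auto
  then interpret star_construction m W P
    using W_nonneg W_sum P_nonneg by unfold_locales auto
  show ?thesis
    unfolding S_def f_def Ss_def fs_def
    by (intro conjI allI impI star_marg_input star_cond_entropy_output_given_fst
        star_cond_entropy_output_given_snd star_cond_entropy_output_given_pair
        star_cond_entropy_output_given_input cond_entropy_output_given_input_le_pair)
qed

end
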